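(* Let $p$ be an odd prime, $n\ge2$, and $m_1,\dots,m_n$ integers with $1\le m_i\le p-1$. Let $\Phi=\left(\prod_{i=1}^n(s_i+1)^{m_i}-1\right)^p\in\mathbb Z[s_1,\dots,s_n]$, and for $0\le j_1,\dots,j_n\le p-1$ let $C_{j_1\cdots j_n}$ be the coefficient of $s_1^{j_1}\cdots s_n^{j_n}$ in $\Phi$ (equivalently in the image of $\Phi$ in $\mathbb Z[s_1,\dots,s_n]/(s_1^p,\dots,s_n^p)$). Then $$p^2\ \Big|\ \sum_{j_1=1}^{p-1}\cdots\sum_{j_n=1}^{p-1}(-1)^{j_1+\cdots+j_n}C_{j_1\cdots j_n}.$$ *)

theory Defs
  imports Main "HOL-Library.Poly_Mapping" "HOL-Library.FuncSet" "HOL-Computational_Algebra.Primes"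
begin

text \<open>Multivariate integer polynomials in variables s_0, s_1, ... represented as finitely
  supported maps from monomials (exponent vectors nat =>0 nat) to integer coefficients;
  multiplication is convolution (Poly_Mapping's ring structure).\<close>

type_synonym int_mpoly = "(nat \<Rightarrow>\<^sub>0 nat) \<Rightarrow>\<^sub>0 int"

definition mvar :: "nat \<Rightarrow> int_mpoly" where
  "mvar i = Poly_Mapping.single (Poly_Mapping.single i 1) 1"

definition mcoeff :: "int_mpoly \<Rightarrow> nat set \<Rightarrow> (nat \<Rightarrow> nat) \<Rightarrow> int" where
  "mcoeff P I j = Poly_Mapping.lookup P (\<Sum>i\<in>I. Poly_Mapping.single i (j i))"

end

theory Submission
  imports Defs "HOL-Number_Theory.Cong"
begin

text \<open>Expanding binomially, \<open>\<Phi> = \<Sum>\<^sub>k C(p,k) (-1)^(p-k) \<Prod>\<^sub>i (s\<^sub>i + 1)^(k m\<^sub>i)\<close>, and the signed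
  coefficient sum factors as \<open>\<Sum>\<^sub>k C(p,k) (-1)^(p-k) \<Prod>\<^sub>i A(k m\<^sub>i)\<close> with
  \<open>A(N) = \<Sum>\<^sub>0\<^sub><\<^sub>t\<^sub><\<^sub>p (-1)^t C(N,t)\<close>. The term \<open>k = 0\<close> vanishes, the term \<open>k = p\<close> is divisible
  by \<open>p^n\<close> because \<open>p\<close> divides \<open>A(pM)\<close>, and for \<open>0 < k < p\<close> we have \<open>p | C(p,k)\<close> and
  \<open>A(k m\<^sub>i) \<equiv> -1 (mod p)\<close>, since \<open>1 + A(N) = \<plusminus>C(N-1,p-1)\<close> is divisible by \<open>p\<close> when \<open>p \<nmid> N\<close>.
  As the interior weights \<open>C(p,k) (-1)^(p-k)\<close> sum to zero for odd \<open>p\<close>, the constant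
  \<open>(-1)^n\<close> may be subtracted from each product, leaving a sum of products of two
  multiples of \<open>p\<close>.\<close>

lemma mcoeff_sum: "mcoeff (\<Sum>k\<in>K. P k) I j = (\<Sum>k\<in>K. mcoeff (P k) I j)"
  by (simp add: mcoeff_def lookup_sum)

lemma mcoeff_of_int_mult: "mcoeff (of_int c * P) I j = c * mcoeff P I j"
  by (simp add: mcoeff_def map.rep_eq when_def flip: single_of_int mult_map_scale_conv_mult)

lemma mvar_power: "mvar i ^ s = Poly_Mapping.single (Poly_Mapping.single i s) 1"
  by (induction s) (simp_all add: mvar_def mult_single flip: single_add)

lemma mvar_plus_one_power:
  "(mvar i + 1) ^ N = (\<Sum>s\<le>N. Poly_Mapping.single (Poly_Mapping.single i s) (int (N choose s)))"
proof -
  have "(mvar i + 1) ^ N = (\<Sum>s\<le>N. of_nat (N choose s) * mvar i ^ s)"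
    by (simp add: binomial_ring)
  then show ?thesis
    by (simp add: mvar_power mult_single flip: single_of_nat)
qed

lemma prod_single:
  "finite I \<Longrightarrow> (\<Prod>i\<in>I. Poly_Mapping.single (f i) (c i)) = Poly_Mapping.single (\<Sum>i\<in>I. f i) (\<Prod>i\<in>I. c i)"
  by (induction I rule: finite_induct) (simp_all add: mult_single)

lemma sum_single_eq_iff:
  assumes "finite I" "t \<in> extensional I"
  shows "(\<Sum>i\<in>I. Poly_Mapping.single i (t i)) = (\<Sum>i\<in>I. Poly_Mapping.single i (j i)) \<longleftrightarrow> t = restrict j I"
  using assms by (auto simp: poly_mapping_eq_iff fun_eq_iff lookup_sum lookup_single when_def extensional_def)

lemma mcoeff_prod_mvar_plus_one_power:
  assumes "finite I"
  shows "mcoeff (\<Prod>i\<in>I. (mvar i + 1) ^ N i) I j = (\<Prod>i\<in>I. int (N i choose j i))"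
proof -
  have "mcoeff (\<Prod>i\<in>I. (mvar i + 1) ^ N i) I j =
      (\<Sum>t\<in>(\<Pi>\<^sub>E i\<in>I. {..N i}). if t = restrict j I then (\<Prod>i\<in>I. int (N i choose t i)) else 0)"
    unfolding mcoeff_def mvar_plus_one_power
    by (simp only: prod_sum_PiE[OF assms finite_atMost] prod_single[OF assms] lookup_sum)
      (rule sum.cong[OF refl], simp add: lookup_single when_def sum_single_eq_iff[OF assms] PiE_iff)
  also have "\<dots> = (if \<forall>i\<in>I. j i \<le> N i then (\<Prod>i\<in>I. int (N i choose j i)) else 0)"
    using assms by (simp add: sum.delta finite_PiE restrict_PiE_iff Pi_iff)
  also have "\<dots> = (\<Prod>i\<in>I. int (N i choose j i))"
    using assms by (simp add: prod_zero_iff not_le)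
  finally show ?thesis .
qed

lemma mcoeff_power_prod_minus_one:
  assumes "finite I"
  shows "mcoeff (((\<Prod>i\<in>I. (mvar i + 1) ^ m i) - 1) ^ q) I j =
    (\<Sum>k\<le>q. int (q choose k) * (-1) ^ (q - k) * (\<Prod>i\<in>I. int (k * m i choose j i)))"
proof -
  let ?X = "\<Prod>i\<in>I. (mvar i + 1) ^ m i"
  have power_X: "?X ^ k = (\<Prod>i\<in>I. (mvar i + 1) ^ (k * m i))" for k
    by (simp add: prod_power_distrib mult.commute[of k] power_mult)
  have "(?X - 1) ^ q = (\<Sum>k\<le>q. of_int (int (q choose k) * (-1) ^ (q - k)) * ?X ^ k)"
    using binomial_ring[of ?X "-1" q] by (simp add: mult_ac)
  then show ?thesis
    by (simp only: power_X mcoeff_sum mcoeff_of_int_mult mcoeff_prod_mvar_plus_one_power[OF assms])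
qed

definition alt_binomial_sum :: "nat \<Rightarrow> nat \<Rightarrow> int" where
  "alt_binomial_sum r N = (\<Sum>t=1..r. (-1) ^ t * int (N choose t))"

lemma alternating_sum_mcoeff_power_prod_minus_one:
  assumes "finite I"
  shows "(\<Sum>j\<in>I \<rightarrow>\<^sub>E {1..r}. (-1) ^ (\<Sum>i\<in>I. j i) *
            mcoeff (((\<Prod>i\<in>I. (mvar i + 1) ^ m i) - 1) ^ q) I j)
       = (\<Sum>k\<le>q. int (q choose k) * (-1) ^ (q - k) * (\<Prod>i\<in>I. alt_binomial_sum r (k * m i)))"
proof -
  have "(\<Sum>j\<in>I \<rightarrow>\<^sub>E {1..r}. (-1) ^ (\<Sum>i\<in>I. j i) *
            mcoeff (((\<Prod>i\<in>I. (mvar i + 1) ^ m i) - 1) ^ q) I j)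
      = (\<Sum>j\<in>I \<rightarrow>\<^sub>E {1..r}. \<Sum>k\<le>q. int (q choose k) * (-1) ^ (q - k) *
          (\<Prod>i\<in>I. (-1) ^ j i * int (k * m i choose j i)))"
    by (simp add: mcoeff_power_prod_minus_one[OF assms] sum_distrib_left power_sum prod.distrib mult_ac)
  also have "\<dots> = (\<Sum>k\<le>q. int (q choose k) * (-1) ^ (q - k) *
      (\<Sum>j\<in>I \<rightarrow>\<^sub>E {1..r}. \<Prod>i\<in>I. (-1) ^ j i * int (k * m i choose j i)))"
    by (subst sum.swap) (simp add: sum_distrib_left)
  also have "\<dots> = (\<Sum>k\<le>q. int (q choose k) * (-1) ^ (q - k) * (\<Prod>i\<in>I. alt_binomial_sum r (k * m i)))"
    by (simp add: alt_binomial_sum_def prod_sum_PiE[OF assms])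
  finally show ?thesis .
qed

lemma alt_binomial_sum_0 [simp]: "alt_binomial_sum r 0 = 0"
  unfolding alt_binomial_sum_def by (rule sum.neutral) simp

lemma sum_alternating_binomial_atMost:
  "N \<ge> 1 \<Longrightarrow> (\<Sum>t\<le>r. (-1) ^ t * int (N choose t)) = (-1) ^ r * int ((N - 1) choose r)"
proof (induction r)
  case (Suc r)
  then obtain M where "N = Suc M" by (cases N) auto
  with Suc show ?case by (simp add: algebra_simps)
qed simp

lemma prime_dvd_alt_binomial_sum_mult:
  assumes "prime p"
  shows "int p dvd alt_binomial_sum (p - 1) (p * M)"
  unfolding alt_binomial_sum_def
proof (rule dvd_sum)
  fix t assume t: "t \<in> {1..p-1}"
  have "t * (p * M choose t) = p * M * ((p * M - 1) choose (t - 1))"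
    using t by (intro times_binomial_minus1_eq) auto
  then have "p dvd t * (p * M choose t)" by simp
  moreover have "\<not> p dvd t" using t assms by (auto dest: dvd_imp_le prime_gt_0_nat)
  ultimately have "p dvd (p * M choose t)" using assms prime_dvd_mult_nat by blast
  then show "int p dvd (-1) ^ t * int (p * M choose t)" by simp
qed

lemma alt_binomial_sum_cong_minus_one:
  assumes "prime p" "\<not> p dvd N"
  shows "[alt_binomial_sum (p - 1) N = -1] (mod int p)"
proof -
  have N: "N \<ge> 1" using assms(2) by (cases N) auto
  have p: "p > 0" using assms(1) by (rule prime_gt_0_nat)
  have "{..p-1} = insert 0 {1..p-1}" by auto
  then have "alt_binomial_sum (p - 1) N + 1 = (\<Sum>t\<le>p-1. (-1) ^ t * int (N choose t))"
    by (simp add: alt_binomial_sum_def)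
  also have "\<dots> = (-1) ^ (p - 1) * int ((N - 1) choose (p - 1))"
    using sum_alternating_binomial_atMost[OF N] .
  finally have sum_eq: "alt_binomial_sum (p - 1) N + 1 = (-1) ^ (p - 1) * int ((N - 1) choose (p - 1))" .
  have "p * (N choose p) = N * ((N - 1) choose (p - 1))"
    using p by (rule times_binomial_minus1_eq)
  then have "p dvd N * ((N - 1) choose (p - 1))" by (metis dvd_triv_left)
  then have "p dvd (N - 1) choose (p - 1)" using assms prime_dvd_mult_nat by blast
  then show ?thesis
    unfolding cong_iff_dvd_diff diff_minus_eq_add sum_eq by simp
qed

lemma prime_square_dvd_binomial_combination:
  fixes b :: "nat \<Rightarrow> int"
  assumes "prime p" "odd p" "b 0 = 0" "int p ^ 2 dvd b p"
    and "\<And>k. k \<in> {1..p-1} \<Longrightarrow> [b k = c] (mod int p)"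
  shows "int p ^ 2 dvd (\<Sum>k\<le>p. int (p choose k) * (-1) ^ (p - k) * b k)"
proof -
  define a where "a k = int (p choose k) * (-1) ^ (p - k)" for k
  have p: "p \<ge> 2" using assms(1) prime_ge_2_nat by blast
  have split: "{..p} = insert 0 (insert p {1..p-1})" using p by auto
  have "(\<Sum>k\<le>p. a k) = (1 + (-1)) ^ p"
    using binomial_ring[of "1::int" "-1" p] by (simp add: a_def)
  then have interior: "(\<Sum>k=1..p-1. a k) = 0"
    using p assms(2) by (simp add: split a_def)
  have "int p ^ 2 dvd a k * (b k - c)" if k: "k \<in> {1..p-1}" for k
  proof -
    have "p dvd (p choose k)" using k p assms(1) by (intro dvd_choose_prime) auto
    then have "int p dvd a k" by (simp add: a_def)
    moreover have "int p dvd b k - c" using assms(5)[OF k] by (simp add: cong_iff_dvd_diff)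
    ultimately show ?thesis by (simp add: power2_eq_square mult_dvd_mono)
  qed
  then have "int p ^ 2 dvd (\<Sum>k=1..p-1. a k * (b k - c))" by (rule dvd_sum)
  moreover have "(\<Sum>k\<le>p. a k * b k) = b p + (\<Sum>k=1..p-1. a k * (b k - c))"
    using p assms(2,3) interior
    by (simp add: split a_def algebra_simps sum_subtractf flip: sum_distrib_left)
  ultimately show ?thesis using assms(4) by (simp add: a_def)
qed

theorem lemma5p1:
  fixes p n :: nat and m :: "nat \<Rightarrow> nat"
  assumes "prime p" and "odd p" and "n \<ge> 2"
    and "\<forall>i\<in>{1..n}. 1 \<le> m i \<and> m i \<le> p - 1"
  shows "(int p)^2 dvd
    (\<Sum>j\<in>{1..n} \<rightarrow>\<^sub>E {1..p-1}.
       (-1) ^ (\<Sum>i=1..n. j i) *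
       mcoeff (((\<Prod>i=1..n. (mvar i + 1) ^ m i) - 1) ^ p) {1..n} j)"
  unfolding alternating_sum_mcoeff_power_prod_minus_one[OF finite_atLeastAtMost]
proof (rule prime_square_dvd_binomial_combination[OF assms(1,2), where c = "(-1) ^ n"])
  show "(\<Prod>i=1..n. alt_binomial_sum (p - 1) (0 * m i)) = 0"
    using assms(3) by simp
  have "int p ^ n dvd (\<Prod>i=1..n. alt_binomial_sum (p - 1) (p * m i))"
    using prod_dvd_prod[OF prime_dvd_alt_binomial_sum_mult[OF assms(1)], of "{1..n}"] by simp
  then show "int p ^ 2 dvd (\<Prod>i=1..n. alt_binomial_sum (p - 1) (p * m i))"
    using le_imp_power_dvd[OF assms(3)] dvd_trans by blast
next
  fix k assume k: "k \<in> {1..p-1}"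
  have "\<not> p dvd k * m i" if "i \<in> {1..n}" for i
  proof -
    have "\<not> p dvd k" "\<not> p dvd m i"
      using k assms(4) that prime_gt_0_nat[OF assms(1)] by (intro nat_dvd_not_less; force)+
    then show ?thesis using prime_dvd_mult_nat[OF assms(1)] by blast
  qed
  then have "[(\<Prod>i=1..n. alt_binomial_sum (p - 1) (k * m i)) = (\<Prod>i=1..n. -1)] (mod int p)"
    by (intro cong_prod alt_binomial_sum_cong_minus_one[OF assms(1)])
  then show "[(\<Prod>i=1..n. alt_binomial_sum (p - 1) (k * m i)) = (-1) ^ n] (mod int p)"
    by simp
qed

end
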